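(* Let $d\ge1$. There exists a constant $C_d>0$ such that for each $x\in\mathbb{R}^d$ there exists a family $(g_{1,x},g_{2,x},\dots,g_{d,x})\in(\mathcal{O}(\mathbb{Z}^d))^d$ with $g_{1,x}=\mathrm{Id}_{\mathbb{R}^d}$ such that the linear map $L_x:\mathbb{R}^d\to\mathbb{R}^d$ defined by $L_x(e_i)=g_{i,x}(x)$ for $i=1,\dots,d$ satisfies \[ \forall y\in\mathbb{R}^d\qquad C_d\|y\|_1\|x\|_1\le\|L_x(y)\|_1\le\|y\|_1\|x\|_1 . \] Moreover, if for each $n\in\mathcal{S}_2$ one sets $(n_1,n_2,\dots,n_d)=(n,g_{2,n}(n),\dots,g_{d,n}(n))$, then \[ \forall y\in\mathbb{R}^d\qquad \frac{C_d}{d^{3/2}}\|y\|_2\le\Big(\sum_{m=1}^d\langle y,n_m\rangle^2\Big)^{1/2}\le\sqrt d\,\|y\|_2 . \]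
   Context: $(e_1,\dots,e_d)$ is the canonical basis of $\mathbb{R}^d$, $\|x\|_1=\sum_i|x_i|$, $\|x\|_2$ is the Euclidean norm, and $\mathcal{S}_2=\{x\in\mathbb{R}^d:\|x\|_2=1\}$. For a permutation $\sigma$ of $\{1,\dots,d\}$ and $\epsilon\in\{-1,+1\}^d$, let $\Psi_{\sigma,\epsilon}(x)=\sum_{i=1}^d\epsilon(i)x_{\sigma(i)}e_i$; $\mathcal{O}(\mathbb{Z}^d)=\{\Psi_{\sigma,\epsilon}\}$ is the group of orthogonal transformations preserving the lattice $\mathbb{Z}^d$. *)

theory Defs
  imports "HOL-Analysis.Analysis"
begin

text \<open>The l1 norm on R^d (index type 'n, d = CARD('n)).\<close>
definition l1norm :: "real ^ 'n::finite \<Rightarrow> real" where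
  "l1norm x = (\<Sum>i\<in>UNIV. \<bar>x $ i\<bar>)"

definition Psi :: "('n::finite \<Rightarrow> 'n) \<Rightarrow> ('n \<Rightarrow> real) \<Rightarrow> real ^ 'n \<Rightarrow> real ^ 'n" where
  "Psi \<sigma> \<epsilon> x = (\<chi> i. \<epsilon> i * x $ (\<sigma> i))"

text \<open>O(Z^d): the group of lattice-preserving orthogonal maps Psi_{sigma,epsilon}.\<close>
definition OZ :: "(real ^ 'n::finite \<Rightarrow> real ^ 'n) set" where
  "OZ = {Psi \<sigma> \<epsilon> | \<sigma> \<epsilon>. \<sigma> permutes (UNIV :: 'n set) \<and> (\<forall>i. \<epsilon> i \<in> {-1, 1})}"

definition Lmap :: "('n::finite \<Rightarrow> (real ^ 'n \<Rightarrow> real ^ 'n)) \<Rightarrow> real ^ 'n \<Rightarrow> real ^ 'n \<Rightarrow> real ^ 'n" where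
  "Lmap g x y = (\<Sum>i\<in>UNIV. (y $ i) *\<^sub>R g i x)"

end

theory Submission imports Defs begin

text \<open>For x \<noteq> 0 the orbit of x under O(Z^d) spans R^d, since g x - g' x is a nonzero multiple of
  e_j for suitable signed transpositions g, g'. Extending x to a basis inside the orbit gives a family
  with g_1 = Id for which L_x is invertible, hence satisfies C_x |y|_1 \<le> |L_x y|_1. Since
  |L_x y - L_x' y|_1 \<le> |y|_1 |x - x'|_1 for a fixed family, the same family works with constant C_x/2
  near x, and compactness of the l1 unit sphere yields a uniform constant; homogeneity extends it to
  all x. For the second estimate write y = L_n z: then |y|^2 = \<Sum>_m z_m \<langle>y, n_m\<rangle> is at most
  |z| (\<Sum>_m \<langle>y, n_m\<rangle>^2)^(1/2), while C |z| \<le> C |z|_1 \<le> |y|_1 \<le> d |y|; this even gives the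
  lower bound with C/d in place of C/d^(3/2).\<close>

lemma l1norm_zero [simp]: "l1norm 0 = 0"
  unfolding l1norm_def by simp

lemma l1norm_axis: "l1norm (axis i c) = \<bar>c\<bar>"
  unfolding l1norm_def axis_def by (simp add: if_distrib[of abs] cong: if_cong)

lemma l1norm_nonneg: "0 \<le> l1norm x"
  unfolding l1norm_def by (simp add: sum_nonneg)

lemma norm_le_l1norm: "norm x \<le> l1norm x"
  unfolding l1norm_def by (rule norm_le_l1_cart)

lemma l1norm_le_card_norm: "l1norm (x :: real ^ 'n) \<le> real CARD('n) * norm x"
proof -
  have "l1norm x \<le> (\<Sum>i\<in>(UNIV :: 'n set). norm x)"
    unfolding l1norm_def by (rule sum_mono) (rule component_le_norm_cart)
  then show ?thesis by simp
qed

lemma l1norm_pos: "x \<noteq> 0 \<Longrightarrow> 0 < l1norm x"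
  using norm_le_l1norm[of x] by (metis zero_less_norm_iff order_less_le_trans)

lemma l1norm_triangle_ineq: "l1norm (x + y) \<le> l1norm x + l1norm y"
  unfolding l1norm_def by (simp add: sum.distrib[symmetric] sum_mono abs_triangle_ineq)

lemma l1norm_scaleR: "l1norm (c *\<^sub>R x) = \<bar>c\<bar> * l1norm x"
  unfolding l1norm_def by (simp add: abs_mult sum_distrib_left)

lemma l1norm_minus_commute: "l1norm (x - y) = l1norm (y - x)"
  unfolding l1norm_def by (simp add: abs_minus_commute)

lemma l1norm_sum: "l1norm (\<Sum>i\<in>A. f i) \<le> (\<Sum>i\<in>A. l1norm (f i))"
proof -
  have "l1norm (\<Sum>i\<in>A. f i) = (\<Sum>j\<in>UNIV. \<bar>\<Sum>i\<in>A. f i $ j\<bar>)"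
    unfolding l1norm_def by (simp add: sum_component)
  also have "\<dots> \<le> (\<Sum>j\<in>UNIV. \<Sum>i\<in>A. \<bar>f i $ j\<bar>)"
    by (rule sum_mono) (rule sum_abs)
  also have "\<dots> = (\<Sum>i\<in>A. l1norm (f i))"
    unfolding l1norm_def by (rule sum.swap)
  finally show ?thesis .
qed

lemma continuous_on_l1norm [continuous_intros]:
  "continuous_on A f \<Longrightarrow> continuous_on A (\<lambda>x. l1norm (f x))"
  unfolding l1norm_def by (intro continuous_intros)

lemma compact_l1norm_sphere: "compact {u :: real ^ 'n. l1norm u = 1}"
proof (subst compact_eq_bounded_closed, intro conjI)
  show "bounded {u :: real ^ 'n. l1norm u = 1}"
    unfolding bounded_iff by (metis norm_le_l1norm mem_Collect_eq)
  show "closed {u :: real ^ 'n. l1norm u = 1}"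
    by (intro closed_Collect_eq continuous_intros)
qed

lemma OZE:
  assumes "g \<in> OZ"
  obtains \<sigma> \<epsilon> where "g = Psi \<sigma> \<epsilon>" "\<sigma> permutes UNIV" "\<forall>i. \<epsilon> i \<in> {-1, 1}"
  using assms unfolding OZ_def by blast

lemma Psi_in_OZ: "\<sigma> permutes UNIV \<Longrightarrow> \<forall>i. \<epsilon> i \<in> {-1, 1} \<Longrightarrow> Psi \<sigma> \<epsilon> \<in> OZ"
  unfolding OZ_def by blast

lemma id_in_OZ: "id \<in> OZ"
proof -
  have "(id :: real ^ 'n \<Rightarrow> _) = Psi id (\<lambda>_. 1)"
    unfolding Psi_def by (simp add: vec_eq_iff fun_eq_iff)
  then show ?thesis using Psi_in_OZ[OF permutes_id] by (metis insertI2 singletonI)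
qed

lemma linear_OZ: "g \<in> OZ \<Longrightarrow> linear g"
  by (erule OZE) (auto simp: Psi_def vec_eq_iff algebra_simps intro!: linearI)

lemma OZ_abs_component:
  assumes "g \<in> OZ"
  obtains \<sigma> where "\<sigma> permutes UNIV" "\<And>x i. \<bar>g x $ i\<bar> = \<bar>x $ \<sigma> i\<bar>"
proof -
  obtain \<sigma> \<epsilon> where g: "g = Psi \<sigma> \<epsilon>" "\<sigma> permutes UNIV" "\<forall>i. \<epsilon> i \<in> {-1, 1}"
    using assms by (rule OZE)
  then have "\<bar>\<epsilon> i\<bar> = 1" for i by (metis abs_1 abs_minus insertE singletonD)
  then have "\<bar>g x $ i\<bar> = \<bar>x $ \<sigma> i\<bar>" for x i
    unfolding g(1) Psi_def by (simp add: abs_mult)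
  then show thesis using g(2) that by blast
qed

lemma l1norm_OZ: "g \<in> OZ \<Longrightarrow> l1norm (g x) = l1norm x"
proof (erule OZ_abs_component)
  fix \<sigma> assume "\<sigma> permutes UNIV" "\<And>x i. \<bar>g x $ i\<bar> = \<bar>x $ \<sigma> i\<bar>"
  then show ?thesis
    unfolding l1norm_def using sum.permute[of \<sigma> UNIV "\<lambda>i. \<bar>x $ i\<bar>"] by (simp add: comp_def)
qed

lemma norm_OZ: "g \<in> OZ \<Longrightarrow> norm (g x) = norm x"
proof (erule OZ_abs_component)
  fix \<sigma> assume "\<sigma> permutes UNIV" "\<And>x i. \<bar>g x $ i\<bar> = \<bar>x $ \<sigma> i\<bar>"
  then show ?thesis
    unfolding norm_vec_def L2_set_def real_norm_def
    using sum.permute[of \<sigma> UNIV "\<lambda>i. \<bar>x $ i\<bar>\<^sup>2"] by (simp add: comp_def)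
qed

lemma linear_Lmap: "linear (Lmap F x)"
  unfolding Lmap_def
  by (intro linearI) (simp_all add: sum.distrib scaleR_add_left scaleR_sum_right)

lemma Lmap_axis: "Lmap F x (axis i 1) = F i x"
  unfolding Lmap_def by (simp add: axis_def if_distrib[of "\<lambda>c. c *\<^sub>R _"] cong: if_cong)

lemma Lmap_diff_point:
  "\<forall>i. F i \<in> OZ \<Longrightarrow> Lmap F x y - Lmap F x' y = Lmap F (x - x') y"
  unfolding Lmap_def
  by (simp add: linear_diff[OF linear_OZ] sum_subtractf[symmetric] scaleR_diff_right)

lemma Lmap_scaleR_point:
  "\<forall>i. F i \<in> OZ \<Longrightarrow> Lmap F (c *\<^sub>R x) y = c *\<^sub>R Lmap F x y"
  unfolding Lmap_def by (simp add: linear_scale[OF linear_OZ] scaleR_sum_right mult.commute)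

lemma l1norm_Lmap_le:
  assumes "\<forall>i. F i \<in> OZ"
  shows "l1norm (Lmap F x y) \<le> l1norm y * l1norm x"
proof -
  have "l1norm (Lmap F x y) \<le> (\<Sum>i\<in>UNIV. l1norm (y $ i *\<^sub>R F i x))"
    unfolding Lmap_def by (rule l1norm_sum)
  also have "\<dots> = (\<Sum>i\<in>UNIV. \<bar>y $ i\<bar> * l1norm x)"
    using assms by (simp add: l1norm_scaleR l1norm_OZ)
  also have "\<dots> = l1norm y * l1norm x"
    unfolding l1norm_def by (simp add: sum_distrib_right)
  finally show ?thesis .
qed

lemma span_OZ_orbit:
  fixes x :: "real ^ 'n"
  assumes "x \<noteq> 0"
  shows "span ((\<lambda>g. g x) ` OZ) = UNIV"
proof -
  let ?V = "(\<lambda>g. g x) ` OZ"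
  obtain k where k: "x $ k \<noteq> 0"
    using assms by (auto simp: vec_eq_iff)
  have axis_in_span: "axis j 1 \<in> span ?V" for j
  proof -
    define \<tau> where "\<tau> = Transposition.transpose j k"
    have \<tau>: "\<tau> permutes UNIV"
      unfolding \<tau>_def by (rule permutes_swap_id) auto
    have "Psi \<tau> (\<lambda>_. 1) x \<in> ?V" "Psi \<tau> (\<lambda>i. if i = j then -1 else 1) x \<in> ?V"
      using Psi_in_OZ[OF \<tau>] by auto
    then have "Psi \<tau> (\<lambda>_. 1) x - Psi \<tau> (\<lambda>i. if i = j then -1 else 1) x \<in> span ?V"
      by (simp add: span_base span_diff)
    also have "Psi \<tau> (\<lambda>_. 1) x - Psi \<tau> (\<lambda>i. if i = j then -1 else 1) x = (2 * x $ k) *\<^sub>R axis j 1"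
      unfolding Psi_def \<tau>_def by (auto simp: vec_eq_iff axis_def)
    finally have "(1 / (2 * x $ k)) *\<^sub>R (2 * x $ k) *\<^sub>R axis j 1 \<in> span ?V"
      by (rule span_scale)
    then show ?thesis using k by simp
  qed
  have "v \<in> span ?V" for v :: "real ^ 'n"
  proof -
    have "v = (\<Sum>i\<in>UNIV. v $ i *\<^sub>R axis i 1)"
      using basis_expansion[of v] by (simp add: scalar_mult_eq_scaleR)
    also have "\<dots> \<in> span ?V"
      by (intro span_sum span_scale axis_in_span)
    finally show ?thesis .
  qed
  then show ?thesis
    by auto
qed

lemma spanning_family_in_OZ_orbit:
  fixes x :: "real ^ 'n" and i0 :: 'n
  assumes "x \<noteq> 0"
  obtains F where "F i0 = id" "\<forall>i. F i \<in> OZ" "span (range (\<lambda>i. F i x)) = UNIV"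
proof -
  let ?V = "(\<lambda>g. g x) ` OZ"
  have "{x} \<subseteq> ?V"
    using id_in_OZ by (metis empty_subsetI id_apply image_eqI insert_subsetI)
  moreover have "independent {x}"
    using assms by simp
  ultimately obtain B where B: "x \<in> B" "B \<subseteq> ?V" "independent B" "?V \<subseteq> span B"
    by (rule maximal_independent_subset_extend) blast
  have span_B: "span B = UNIV"
    using span_OZ_orbit[OF assms] B(4) by (metis span_minimal subspace_span top.extremum_unique)
  then have "card B = CARD('n)"
    using basis_card_eq_dim[of B UNIV] B(3) by simp
  then obtain f where f: "bij_betw f (UNIV :: 'n set) B"
    using finite_same_card_bij[of "UNIV :: 'n set" B] B(3) finiteI_independent by auto
  then obtain a where "f a = x"
    using B(1) unfolding bij_betw_def by auto
  define h where "h = f \<circ> Transposition.transpose i0 a"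
  have h: "bij_betw h UNIV B"
    unfolding h_def by (rule bij_betw_trans[OF permutes_imp_bij f]) (rule permutes_swap_id, auto)
  have "h i0 = x"
    using \<open>f a = x\<close> by (simp add: h_def)
  have "h i \<in> ?V" for i
    using bij_betw_apply[OF h] B(2) by blast
  then have "\<exists>g \<in> OZ. g x = h i" for i
    by (metis imageE)
  then obtain F0 where F0: "\<And>i. F0 i \<in> OZ \<and> F0 i x = h i"
    by metis
  define F where "F i = (if i = i0 then id else F0 i)" for i
  have "F i x = h i" for i
    using F0 \<open>h i0 = x\<close> by (simp add: F_def)
  then have "range (\<lambda>i. F i x) = B"
    using bij_betw_imp_surj_on[OF h] by simp
  moreover have "\<forall>i. F i \<in> OZ"
    using F0 id_in_OZ by (simp add: F_def)
  ultimately show thesis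
    using that[of F] span_B by (simp add: F_def)
qed

lemma inj_Lmap_if_span:
  assumes "span (range (\<lambda>i. F i x)) = UNIV"
  shows "inj (Lmap F x)"
proof -
  have "range (\<lambda>i. F i x) \<subseteq> range (Lmap F x)"
    by (metis Lmap_axis image_subsetI rangeI)
  then have "UNIV \<subseteq> range (Lmap F x)"
    using assms span_minimal linear_subspace_image[OF linear_Lmap subspace_UNIV] by metis
  then show ?thesis
    using linear_surjective_imp_injective[OF linear_Lmap] by auto
qed

lemma linear_inj_l1norm_lower_bound:
  fixes f :: "real ^ 'n \<Rightarrow> real ^ 'm"
  assumes "linear f" "inj f"
  obtains c where "c > 0" "\<And>y. c * l1norm y \<le> l1norm (f y)"
proof -
  obtain e where e: "e > 0" "\<And>y. e * norm y \<le> norm (f y)"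
    using injective_imp_isometric[OF closed_UNIV subspace_UNIV linear_conv_bounded_linear[THEN iffD1, OF assms(1)]]
      assms linear_inj_iff_eq_0 by blast
  have "e / CARD('n) * l1norm y \<le> l1norm (f y)" for y
  proof -
    have "e / CARD('n) * l1norm y \<le> e / CARD('n) * (CARD('n) * norm y)"
      using e(1) l1norm_le_card_norm[of y] by (intro mult_left_mono) auto
    also have "\<dots> \<le> norm (f y)"
      using e by simp
    also have "\<dots> \<le> l1norm (f y)"
      by (rule norm_le_l1norm)
    finally show ?thesis .
  qed
  then show thesis
    using that[of "e / CARD('n)"] e(1) by simp
qed

lemma lower_bound_family_at:
  fixes x :: "real ^ 'n" and i0 :: 'n
  assumes "x \<noteq> 0"
  shows "\<exists>c F. c > 0 \<and> F i0 = id \<and> (\<forall>i. F i \<in> OZ) \<and> (\<forall>y. c * l1norm y \<le> l1norm (Lmap F x y))"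
proof -
  obtain F where F: "F i0 = id" "\<forall>i. F i \<in> OZ" "span (range (\<lambda>i. F i x)) = UNIV"
    using assms by (rule spanning_family_in_OZ_orbit)
  then obtain c where "c > 0" "\<And>y. c * l1norm y \<le> l1norm (Lmap F x y)"
    using linear_inj_l1norm_lower_bound[OF linear_Lmap inj_Lmap_if_span] by metis
  then show ?thesis
    using F by blast
qed

lemma Lmap_lower_bound_perturb:
  assumes "\<forall>i. F i \<in> OZ" and "\<And>y. c * l1norm y \<le> l1norm (Lmap F w y)"
  shows "(c - l1norm (u - w)) * l1norm y \<le> l1norm (Lmap F u y)"
proof -
  have "Lmap F w y = Lmap F u y + Lmap F (w - u) y"
    using Lmap_diff_point[OF assms(1), of w y u] by (simp add: algebra_simps)
  then have "c * l1norm y \<le> l1norm (Lmap F u y) + l1norm (Lmap F (w - u) y)"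
    using assms(2)[of y] l1norm_triangle_ineq order_trans by metis
  also have "\<dots> \<le> l1norm (Lmap F u y) + l1norm y * l1norm (u - w)"
    using l1norm_Lmap_le[OF assms(1), of "w - u" y] l1norm_minus_commute[of w u] by simp
  finally show ?thesis
    by (simp add: algebra_simps)
qed

lemma finite_l1norm_ball_cover:
  fixes S :: "(real ^ 'n) set"
  assumes "compact S" and "\<And>w. w \<in> S \<Longrightarrow> r w > 0"
  obtains W where "finite W" "W \<subseteq> S" "\<forall>u\<in>S. \<exists>w\<in>W. l1norm (u - w) < r w"
proof -
  define U where "U w = {u. l1norm (u - w) < r w}" for w
  have "open (U w)" if "w \<in> S" for w
    unfolding U_def by (intro open_Collect_less continuous_intros)
  moreover have "S \<subseteq> (\<Union>w\<in>S. U w)"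
    using assms(2) by (force simp: U_def)
  ultimately obtain W where "W \<subseteq> S" "finite W" "S \<subseteq> (\<Union>w\<in>W. U w)"
    using assms(1) by (metis compactE_image)
  then show thesis
    using that by (force simp: U_def)
qed

lemma uniform_lower_bound_on_l1norm_sphere:
  fixes i0 :: "'n::finite"
  obtains C where "C > 0" and "\<And>u :: real ^ 'n. l1norm u = 1 \<Longrightarrow>
    \<exists>F. F i0 = id \<and> (\<forall>i. F i \<in> OZ) \<and> (\<forall>y. C * l1norm y \<le> l1norm (Lmap F u y))"
proof -
  define S where "S = {u :: real ^ 'n. l1norm u = 1}"
  have "\<exists>c F. c > 0 \<and> F i0 = id \<and> (\<forall>i. F i \<in> OZ) \<and> (\<forall>y. c * l1norm y \<le> l1norm (Lmap F u y))"
    if "u \<in> S" for u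
    using that by (intro lower_bound_family_at) (auto simp: S_def)
  then obtain c F where cF: "\<And>u. u \<in> S \<Longrightarrow> c u > 0 \<and> F u i0 = id \<and> (\<forall>i. F u i \<in> OZ) \<and>
      (\<forall>y. c u * l1norm y \<le> l1norm (Lmap (F u) u y))"
    by metis
  have "compact S"
    unfolding S_def by (rule compact_l1norm_sphere)
  moreover have "c w / 2 > 0" if "w \<in> S" for w
    using cF[OF that] by simp
  ultimately obtain W where W: "finite W" "W \<subseteq> S" "\<forall>u\<in>S. \<exists>w\<in>W. l1norm (u - w) < c w / 2"
    by (rule finite_l1norm_ball_cover)
  have "axis i0 1 \<in> S"
    by (simp add: S_def l1norm_axis)
  then have "W \<noteq> {}"
    using W(3) by blast
  define C where "C = Min ((\<lambda>w. c w / 2) ` W)"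
  have "C > 0"
    unfolding C_def using W cF \<open>W \<noteq> {}\<close> by (subst Min_gr_iff) auto
  moreover have "\<exists>F. F i0 = id \<and> (\<forall>i. F i \<in> OZ) \<and> (\<forall>y. C * l1norm y \<le> l1norm (Lmap F u y))"
    if "l1norm u = 1" for u
  proof -
    have "u \<in> S"
      using that by (simp add: S_def)
    then obtain w where w: "w \<in> W" "l1norm (u - w) < c w / 2"
      using W(3) by blast
    then have "C \<le> c w - l1norm (u - w)"
      unfolding C_def using W(1) Min_le[of "(\<lambda>w. c w / 2) ` W"] by fastforce
    then have "C * l1norm y \<le> l1norm (Lmap (F w) u y)" for y
      using Lmap_lower_bound_perturb[of "F w" "c w" w u y] cF[of w] w(1) W(2)
        l1norm_nonneg[of y] mult_right_mono order_trans by blast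
    then show ?thesis
      using cF[of w] w(1) W(2) by blast
  qed
  ultimately show thesis
    using that by blast
qed

lemma homogeneous_lower_bound_family:
  fixes i0 :: "'n::finite"
  obtains C and G :: "real ^ 'n \<Rightarrow> 'n \<Rightarrow> real ^ 'n \<Rightarrow> real ^ 'n"
  where "C > 0" "\<And>x i. G x i \<in> OZ" "\<And>x. G x i0 = id"
    "\<And>x y. C * l1norm y * l1norm x \<le> l1norm (Lmap (G x) x y)"
proof -
  obtain C where "C > 0" and "\<And>u :: real ^ 'n. l1norm u = 1 \<Longrightarrow>
    \<exists>F. F i0 = id \<and> (\<forall>i. F i \<in> OZ) \<and> (\<forall>y. C * l1norm y \<le> l1norm (Lmap F u y))"
    using uniform_lower_bound_on_l1norm_sphere[of i0] by blast
  then obtain F where F: "\<And>u :: real ^ 'n. l1norm u = 1 \<Longrightarrow>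
    F u i0 = id \<and> (\<forall>i. F u i \<in> OZ) \<and> (\<forall>y. C * l1norm y \<le> l1norm (Lmap (F u) u y))"
    by metis
  define G where "G x = (if x = 0 then (\<lambda>_. id) else F (x /\<^sub>R l1norm x))" for x :: "real ^ 'n"
  have unit: "l1norm (x /\<^sub>R l1norm x) = 1" if "x \<noteq> 0" for x :: "real ^ 'n"
    using l1norm_pos[OF that] by (simp add: l1norm_scaleR)
  have G_OZ: "G x i \<in> OZ" for x i
    using F[OF unit] id_in_OZ by (cases "x = 0") (simp_all add: G_def)
  have "G x i0 = id" for x
    using F[OF unit] by (simp add: G_def)
  moreover have "C * l1norm y * l1norm x \<le> l1norm (Lmap (G x) x y)" for x y
  proof (cases "x = 0")
    case False
    have "Lmap (G x) x y = l1norm x *\<^sub>R Lmap (G x) (x /\<^sub>R l1norm x) y"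
      using Lmap_scaleR_point[of "G x" "l1norm x" "x /\<^sub>R l1norm x"] G_OZ l1norm_pos[OF False] by simp
    then have "l1norm (Lmap (G x) x y) = l1norm x * l1norm (Lmap (F (x /\<^sub>R l1norm x)) (x /\<^sub>R l1norm x) y)"
      using False by (simp add: G_def l1norm_scaleR l1norm_nonneg)
    then show ?thesis
      using F[OF unit[OF False]] l1norm_nonneg[of x] by (simp add: mult.commute mult_left_mono)
  qed (simp add: l1norm_nonneg)
  ultimately show thesis
    using that \<open>C > 0\<close> G_OZ by blast
qed

lemma frame_upper_bound:
  fixes y :: "'a::real_inner" and v :: "'i::finite \<Rightarrow> 'a"
  assumes "\<And>m. norm (v m) \<le> 1"
  shows "sqrt (\<Sum>m\<in>UNIV. (inner y (v m))\<^sup>2) \<le> sqrt (CARD('i)) * norm y"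
proof -
  have "(inner y (v m))\<^sup>2 \<le> (norm y)\<^sup>2" for m
  proof -
    have "\<bar>inner y (v m)\<bar> \<le> norm y * norm (v m)"
      by (rule Cauchy_Schwarz_ineq2)
    also have "\<dots> \<le> norm y"
      using assms[of m] by (simp add: mult_left_le)
    finally show ?thesis
      using abs_le_square_iff[of "inner y (v m)" "norm y"] by simp
  qed
  then have "(\<Sum>m\<in>UNIV. (inner y (v m))\<^sup>2) \<le> CARD('i) * (norm y)\<^sup>2"
    using sum_mono[of UNIV "\<lambda>m. (inner y (v m))\<^sup>2" "\<lambda>_. (norm y)\<^sup>2"] by simp
  then show ?thesis
    by (metis real_sqrt_le_mono real_sqrt_mult real_sqrt_abs abs_norm_cancel)
qed

lemma frame_lower_bound:
  fixes n y :: "real ^ 'n"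
  assumes "c > 0" and lower: "\<And>z. c * l1norm z \<le> l1norm (Lmap F n z)"
  shows "c / CARD('n) * norm y \<le> sqrt (\<Sum>m\<in>UNIV. (inner y (F m n))\<^sup>2)"
proof -
  define w where "w = (\<chi> m. inner y (F m n))"
  have norm_w: "norm w = sqrt (\<Sum>m\<in>UNIV. (inner y (F m n))\<^sup>2)"
    unfolding w_def norm_vec_def L2_set_def by simp
  have "inj (Lmap F n)"
    unfolding linear_inj_iff_eq_0[OF linear_Lmap]
    using lower \<open>c > 0\<close> by (metis l1norm_zero l1norm_pos mult_pos_pos not_le)
  then obtain z where z: "Lmap F n z = y"
    using linear_injective_imp_surjective[OF linear_Lmap] by (metis surjD)
  have "(norm y)\<^sup>2 = inner y (\<Sum>i\<in>UNIV. z $ i *\<^sub>R F i n)"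
    using z by (simp add: power2_norm_eq_inner Lmap_def)
  also have "\<dots> = (\<Sum>i\<in>UNIV. z $ i * inner y (F i n))"
    by (simp add: inner_sum_right)
  also have "\<dots> = inner z w"
    by (simp add: w_def inner_vec_def)
  also have "\<dots> \<le> norm z * norm w"
    by (rule norm_cauchy_schwarz)
  finally have "c * (norm y)\<^sup>2 \<le> c * norm z * norm w"
    using \<open>c > 0\<close> by (simp add: mult.assoc)
  moreover have "c * norm z \<le> CARD('n) * norm y"
    using mult_left_mono[OF norm_le_l1norm[of z], of c] \<open>c > 0\<close> lower[of z] z l1norm_le_card_norm[of y]
    unfolding z
    by linarith
  ultimately have "c * (norm y)\<^sup>2 \<le> CARD('n) * norm y * norm w"
    by (meson mult_right_mono norm_ge_zero order_trans)
  then have "c * norm y \<le> CARD('n) * norm w"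
    by (cases "y = 0") (auto simp: power2_eq_square)
  then show ?thesis
    by (simp add: norm_w field_simps)
qed

lemma unit_frame_bounds:
  fixes n y :: "real ^ 'n"
  assumes "C > 0" "\<forall>m. F m \<in> OZ" "norm n = 1"
    and lower: "\<And>z. C * l1norm z * l1norm n \<le> l1norm (Lmap F n z)"
  shows "C / CARD('n) powr (3/2) * norm y \<le> sqrt (\<Sum>m\<in>UNIV. (inner y (F m n))\<^sup>2)"
    and "sqrt (\<Sum>m\<in>UNIV. (inner y (F m n))\<^sup>2) \<le> sqrt CARD('n) * norm y"
proof -
  have "C * l1norm z \<le> l1norm (Lmap F n z)" for z
  proof -
    have "C * l1norm z * 1 \<le> C * l1norm z * l1norm n"
      using norm_le_l1norm[of n] assms(1,3) l1norm_nonneg[of z] by (intro mult_left_mono) auto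
    then show ?thesis
      using lower[of z] by simp
  qed
  then have "C / CARD('n) * norm y \<le> sqrt (\<Sum>m\<in>UNIV. (inner y (F m n))\<^sup>2)"
    by (rule frame_lower_bound[OF assms(1)])
  moreover have "C / CARD('n) powr (3/2) \<le> C / CARD('n)"
  proof -
    have "real CARD('n) powr 1 \<le> CARD('n) powr (3/2)"
      by (intro powr_mono) auto
    then show ?thesis
      using assms(1) by (intro divide_left_mono) auto
  qed
  ultimately show "C / CARD('n) powr (3/2) * norm y \<le> sqrt (\<Sum>m\<in>UNIV. (inner y (F m n))\<^sup>2)"
    by (meson mult_right_mono norm_ge_zero order_trans)
  show "sqrt (\<Sum>m\<in>UNIV. (inner y (F m n))\<^sup>2) \<le> sqrt CARD('n) * norm y"
    using assms(2,3) by (intro frame_upper_bound) (simp add: norm_OZ)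
qed

theorem lemma2p2:
  fixes i0 :: "'n::finite"
  shows "\<exists>C>0. \<exists>G :: real ^ 'n \<Rightarrow> 'n \<Rightarrow> (real ^ 'n \<Rightarrow> real ^ 'n).
    (\<forall>x. (\<forall>i. G x i \<in> OZ) \<and> G x i0 = id \<and>
         (\<forall>y. C * l1norm y * l1norm x \<le> l1norm (Lmap (G x) x y) \<and>
              l1norm (Lmap (G x) x y) \<le> l1norm y * l1norm x)) \<and>
    (\<forall>n. norm n = 1 \<longrightarrow>
         (\<forall>y. C / (real CARD('n) powr (3/2)) * norm y \<le> sqrt (\<Sum>m\<in>UNIV. (inner y (G n m n))\<^sup>2) \<and>
              sqrt (\<Sum>m\<in>UNIV. (inner y (G n m n))\<^sup>2) \<le> sqrt (real CARD('n)) * norm y))"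
proof -
  obtain C and G :: "real ^ 'n \<Rightarrow> 'n \<Rightarrow> real ^ 'n \<Rightarrow> real ^ 'n"
    where C: "C > 0" and G_OZ: "\<And>x i. G x i \<in> OZ" and G_i0: "\<And>x. G x i0 = id"
      and lower: "\<And>x y. C * l1norm y * l1norm x \<le> l1norm (Lmap (G x) x y)"
    using homogeneous_lower_bound_family[of i0] by blast
  have "\<forall>x. (\<forall>i. G x i \<in> OZ) \<and> G x i0 = id \<and>
         (\<forall>y. C * l1norm y * l1norm x \<le> l1norm (Lmap (G x) x y) \<and>
              l1norm (Lmap (G x) x y) \<le> l1norm y * l1norm x)"
    using G_OZ G_i0 lower l1norm_Lmap_le[of "G _"] by simp
  moreover have "\<forall>n. norm n = 1 \<longrightarrow>
         (\<forall>y. C / (real CARD('n) powr (3/2)) * norm y \<le> sqrt (\<Sum>m\<in>UNIV. (inner y (G n m n))\<^sup>2) \<and>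
              sqrt (\<Sum>m\<in>UNIV. (inner y (G n m n))\<^sup>2) \<le> sqrt (real CARD('n)) * norm y)"
    using G_OZ lower by (intro allI impI conjI unit_frame_bounds[OF C]) simp_all
  ultimately show ?thesis
    using C by blast
qed

end
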